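(* Let $\alpha_f>0$ and $\mathcal{R}_f>0$ be arbitrary constants, and define functions on $[0,\infty)$ by $$\psi(r) := e^{-\alpha_f \min\{r^2,\mathcal{R}_f^2\}},\qquad \Psi(r):=\int_0^r\psi(s)\,ds,\qquad g(r):=1-\frac12\,\frac{\int_0^{\min\{r,\mathcal{R}_f\}}\frac{\Psi(s)}{\psi(s)}\,ds}{\int_0^{\mathcal{R}_f}\frac{\Psi(s)}{\psi(s)}\,ds},\qquad f(r):=\int_0^r\psi(s)g(s)\,ds.$$ Then: (F1) $f(0)=0$ and $f'(0)=1$. (F2) For all $r\ge 0$, $\frac12 e^{-\alpha_f\mathcal{R}_f^2}\le \frac12\psi(r)\le f'(r)\le 1$. (F3) For all $r\ge0$, $\frac12 e^{-\alpha_f\mathcal{R}_f^2}\, r\le \frac12\Psi(r)\le f(r)\le \Psi(r)\le r$. (F4) For all $0\le r\le \mathcal{R}_f$, $f''(r)+\alpha_f\, r f'(r)\le -\frac{e^{-\alpha_f\mathcal{R}_f^2}}{\mathcal{R}_f^2}\, f(r)$. (F5) For all $r\ge0$, $f''(r)\le 0$, and $f''(r)=0$ when $r>\mathcal{R}_f$. (F6) If $\alpha_f\mathcal{R}_f^2\ge \ln 2$, then for any $0<c<1$ and $r\ge 0$, $f(r)\le e^{-\frac{c\, e^{-\alpha_f\mathcal{R}_f^2}}{4}}\, f((1+c)r)$. *)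

theory Defs
  imports "HOL-Analysis.Analysis"
begin

definition psi :: "real \<Rightarrow> real \<Rightarrow> real \<Rightarrow> real" where
  "psi \<alpha> R r = exp (- \<alpha> * min (r\<^sup>2) (R\<^sup>2))"

definition Psi :: "real \<Rightarrow> real \<Rightarrow> real \<Rightarrow> real" where
  "Psi \<alpha> R r = integral {0..r} (psi \<alpha> R)"

definition gfun :: "real \<Rightarrow> real \<Rightarrow> real \<Rightarrow> real" where
  "gfun \<alpha> R r = 1 - (1/2) *
     (integral {0..min r R} (\<lambda>s. Psi \<alpha> R s / psi \<alpha> R s)
      / integral {0..R} (\<lambda>s. Psi \<alpha> R s / psi \<alpha> R s))"

definition ff :: "real \<Rightarrow> real \<Rightarrow> real \<Rightarrow> real" where
  "ff \<alpha> R r = integral {0..r} (\<lambda>s. psi \<alpha> R s * gfun \<alpha> R s)"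

end

theory Submission
  imports Defs
begin

text \<open>
  Write \<open>E = exp (-\<alpha> R\<^sup>2)\<close>. Since \<open>E \<le> \<psi> \<le> 1\<close> and \<open>1/2 \<le> g \<le> 1\<close>, the derivative \<open>f' = \<psi> g\<close>
  lies between \<open>\<psi>/2\<close> and \<open>\<psi>\<close>; integrating gives (F2) and (F3). On \<open>[0, R]\<close> the product rule
  gives \<open>f'' = -2\<alpha> r \<psi> g - \<Psi> / (2 I)\<close> with \<open>I = \<integral>\<^sub>0\<^sup>R \<Psi>/\<psi>\<close>, and \<open>\<Psi>(s)/\<psi>(s) \<le> s/E\<close> gives
  \<open>2 I \<le> R\<^sup>2/E\<close>, hence (F4); beyond \<open>R\<close> both \<open>\<psi>\<close> and \<open>g\<close> are constant. For (F6), \<open>f' \<ge> E/2\<close>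
  makes \<open>f\<close> grow by at least \<open>c r E/2\<close> on \<open>[r, (1+c) r]\<close>; together with \<open>f(r) \<le> r\<close> and the
  elementary bound \<open>1 \<le> exp (-x/4) (1 + x/2)\<close> for \<open>0 \<le> x \<le> 2\<close> this suffices.
\<close>

lemma integral_has_real_derivative_atLeast:
  fixes k :: "real \<Rightarrow> real"
  assumes "continuous_on {a..} k" and "a \<le> r"
  shows "((\<lambda>x. integral {a..x} k) has_real_derivative k r) (at r within {a..})"
proof -
  have "((\<lambda>x. integral {a..x} k) has_real_derivative k r) (at r within {a..r+1})"
    by (rule integral_has_real_derivative)
      (auto intro: continuous_on_subset[OF assms(1)] simp: assms(2))
  moreover have "at r within {a..r+1} = at r within {a..}"
    by (rule at_within_nhd[where S="{..<r+1}"]) auto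
  ultimately show ?thesis by simp
qed

lemma continuous_on_integral_atLeast:
  fixes k :: "real \<Rightarrow> real"
  assumes "continuous_on {a..} k"
  shows "continuous_on {a..} (\<lambda>x. integral {a..x} k)"
  by (rule DERIV_continuous_on[OF integral_has_real_derivative_atLeast[OF assms]]) auto

lemma has_integral_id_real:
  fixes a b :: real
  assumes "a \<le> b"
  shows "((\<lambda>s. s) has_integral (b\<^sup>2 - a\<^sup>2) / 2) {a..b}"
proof -
  have "((\<lambda>s. s) has_integral (\<lambda>x. x\<^sup>2/2) b - (\<lambda>x. x\<^sup>2/2) a) {a..b}"
    by (rule fundamental_theorem_of_calculus[OF assms])
      (auto intro!: derivative_eq_intros
        simp: has_real_derivative_iff_has_vector_derivative[symmetric])
  then show ?thesis by (simp add: diff_divide_distrib)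
qed

lemma has_field_derivative_transform:
  assumes "x \<in> s" and "\<And>x. x \<in> s \<Longrightarrow> g x = f x"
    and "(f has_field_derivative D) (at x within s)"
  shows "(g has_field_derivative D) (at x within s)"
  using assms unfolding has_field_derivative_def by (rule has_derivative_transform)

lemma one_le_exp_neg_quarter_mult:
  fixes x :: real
  assumes "0 \<le> x" and "x \<le> 2"
  shows "1 \<le> exp (- x / 4) * (1 + x / 2)"
proof -
  have "(1 - x / 4) * (1 + x / 2) = 1 + x * (2 - x) / 8"
    by (simp add: field_simps)
  also have "1 \<le> \<dots>"
    using assms by simp
  moreover have "(1 - x / 4) * (1 + x / 2) \<le> exp (- x / 4) * (1 + x / 2)"
    using exp_ge_add_one_self[of "- x / 4"] assms by (intro mult_right_mono) auto
  ultimately show ?thesis by linarith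
qed

lemma le_exp_mult_of_linear_gain:
  fixes a b r x :: real
  assumes "0 \<le> a" and "a \<le> r" and "a + x * r / 2 \<le> b" and "0 \<le> x" and "x \<le> 2"
  shows "a \<le> exp (- x / 4) * b"
proof -
  have "a * x \<le> r * x"
    using assms by (intro mult_right_mono) auto
  then have gain: "a * (1 + x / 2) \<le> b"
    using assms(3) by (simp add: algebra_simps)
  have "a \<le> a * (exp (- x / 4) * (1 + x / 2))"
    using one_le_exp_neg_quarter_mult[OF assms(4,5)] assms(1) by (simp add: mult_le_cancel_left1)
  also have "\<dots> = exp (- x / 4) * (a * (1 + x / 2))"
    by simp
  also have "\<dots> \<le> exp (- x / 4) * b"
    using gain by simp
  finally show ?thesis .
qed

lemma psi_pos: "0 < psi \<alpha> R r"
  by (simp add: psi_def)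

lemma continuous_on_psi: "continuous_on S (psi \<alpha> R)"
  unfolding psi_def by (intro continuous_intros)

locale cutoff_profile =
  fixes \<alpha> R :: real
  assumes alpha_nonneg: "0 \<le> \<alpha>" and R_pos: "0 < R"
begin

abbreviation \<psi> where "\<psi> \<equiv> psi \<alpha> R"
abbreviation \<Psi> where "\<Psi> \<equiv> Psi \<alpha> R"
abbreviation g where "g \<equiv> gfun \<alpha> R"
abbreviation f where "f \<equiv> ff \<alpha> R"
abbreviation E where "E \<equiv> exp (- \<alpha> * R\<^sup>2)"

lemma psi_le_one: "\<psi> r \<le> 1"
  using alpha_nonneg by (simp add: psi_def)

lemma exp_le_psi: "E \<le> \<psi> r"
  using alpha_nonneg by (simp add: psi_def mult_left_mono)

lemma E_le_one: "E \<le> 1"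
  using alpha_nonneg by simp

lemma psi_inside:
  assumes "0 \<le> r" and "r \<le> R"
  shows "\<psi> r = exp (- \<alpha> * r\<^sup>2)"
proof -
  have "r\<^sup>2 \<le> R\<^sup>2"
    using assms by (intro power_mono) auto
  then show ?thesis by (simp add: psi_def)
qed

lemma psi_outside:
  assumes "R \<le> r"
  shows "\<psi> r = E"
proof -
  have "R\<^sup>2 \<le> r\<^sup>2"
    using assms R_pos by (intro power_mono) auto
  then show ?thesis by (simp add: psi_def)
qed

lemma continuous_on_Psi: "continuous_on {0..} \<Psi>"
  unfolding Psi_def[abs_def] by (rule continuous_on_integral_atLeast[OF continuous_on_psi])

lemma Psi_lower:
  assumes "0 \<le> r"
  shows "E * r \<le> \<Psi> r"
proof -
  have "integral {0..r} (\<lambda>_. E) \<le> integral {0..r} \<psi>"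
    by (intro integral_le integrable_continuous_interval continuous_on_psi continuous_on_const
        exp_le_psi)
  then show ?thesis
    using assms by (simp add: Psi_def mult.commute)
qed

lemma Psi_upper:
  assumes "0 \<le> r"
  shows "\<Psi> r \<le> r"
proof -
  have "integral {0..r} \<psi> \<le> integral {0..r} (\<lambda>_. 1)"
    by (intro integral_le integrable_continuous_interval continuous_on_psi continuous_on_const)
      (auto intro: psi_le_one)
  then show ?thesis
    using assms by (simp add: Psi_def)
qed

lemma Psi_nonneg:
  assumes "0 \<le> r"
  shows "0 \<le> \<Psi> r"
  using Psi_lower[OF assms] assms by (meson exp_ge_zero mult_nonneg_nonneg order_trans)

lemma continuous_on_Psi_over_psi: "continuous_on {0..} (\<lambda>s. \<Psi> s / \<psi> s)"
  by (intro continuous_on_divide continuous_on_Psi continuous_on_psi)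
    (simp add: psi_pos less_imp_neq[symmetric])

lemma Psi_over_psi_lower:
  assumes "0 \<le> s"
  shows "E * s \<le> \<Psi> s / \<psi> s"
proof -
  have "\<Psi> s \<le> \<Psi> s / \<psi> s"
    using Psi_nonneg[OF assms] psi_pos[of \<alpha> R s] psi_le_one[of s]
    by (simp add: le_divide_eq mult_left_le)
  then show ?thesis
    using Psi_lower[OF assms] by linarith
qed

lemma Psi_over_psi_upper:
  assumes "0 \<le> s"
  shows "\<Psi> s / \<psi> s \<le> s / E"
  using Psi_nonneg[OF assms] Psi_upper[OF assms] exp_le_psi[of s] assms
  by (intro frac_le) auto

definition ratio_integral :: "real \<Rightarrow> real" where
  "ratio_integral t = integral {0..t} (\<lambda>s. \<Psi> s / \<psi> s)"

lemma ratio_integral_has_derivative: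
  assumes "0 \<le> r"
  shows "(ratio_integral has_real_derivative \<Psi> r / \<psi> r) (at r within {0..})"
  unfolding ratio_integral_def[abs_def]
  by (rule integral_has_real_derivative_atLeast[OF continuous_on_Psi_over_psi assms])

lemma integrable_Psi_over_psi: "(\<lambda>s. \<Psi> s / \<psi> s) integrable_on {0..t}"
  by (rule integrable_continuous_interval)
    (auto intro: continuous_on_subset[OF continuous_on_Psi_over_psi])

lemma ratio_integral_nonneg: "0 \<le> ratio_integral t"
  unfolding ratio_integral_def
  using Psi_nonneg psi_pos
  by (intro integral_nonneg integrable_Psi_over_psi) (simp add: less_imp_le)

lemma ratio_integral_le_R:
  assumes "t \<le> R"
  shows "ratio_integral t \<le> ratio_integral R"
  unfolding ratio_integral_def
  using Psi_nonneg psi_pos assms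
  by (intro integral_subset_le integrable_Psi_over_psi) (auto simp: less_imp_le)

lemma has_integral_Psi_over_psi:
  "((\<lambda>s. \<Psi> s / \<psi> s) has_integral ratio_integral t) {0..t}"
  unfolding ratio_integral_def by (rule integrable_integral[OF integrable_Psi_over_psi])

lemma has_integral_linear_0_R: "((\<lambda>s. c * s) has_integral c * (R\<^sup>2 / 2)) {0..R}"
  using has_integral_mult_right[OF has_integral_id_real[of 0 R]] R_pos by simp

lemma ratio_integral_R_pos: "0 < ratio_integral R"
proof -
  have "E * (R\<^sup>2 / 2) \<le> ratio_integral R"
    by (rule has_integral_le[OF has_integral_linear_0_R has_integral_Psi_over_psi],
        rule Psi_over_psi_lower) simp
  moreover have "0 < E * (R\<^sup>2 / 2)"
    using R_pos by simp
  ultimately show ?thesis by linarith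
qed

lemma ratio_integral_R_le: "ratio_integral R \<le> R\<^sup>2 / (2 * E)"
proof -
  have "ratio_integral R \<le> (1 / E) * (R\<^sup>2 / 2)"
    by (rule has_integral_le[OF has_integral_Psi_over_psi has_integral_linear_0_R],
        rule order_trans[OF Psi_over_psi_upper]) simp_all
  then show ?thesis by simp
qed

lemma gfun_eq: "g r = 1 - ratio_integral (min r R) / (2 * ratio_integral R)"
  by (simp add: gfun_def ratio_integral_def)

lemma gfun_0: "g 0 = 1"
  using R_pos by (simp add: gfun_eq ratio_integral_def)

lemma gfun_outside:
  assumes "R \<le> r"
  shows "g r = 1 / 2"
  using assms ratio_integral_R_pos by (simp add: gfun_eq)

lemma gfun_bounds:
  assumes "0 \<le> r"
  shows "1 / 2 \<le> g r \<and> g r \<le> 1"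
proof -
  have "0 \<le> ratio_integral (min r R) / ratio_integral R"
    "ratio_integral (min r R) / ratio_integral R \<le> 1"
    using ratio_integral_nonneg ratio_integral_le_R[of "min r R"] ratio_integral_R_pos
    by auto
  then show ?thesis
    by (simp add: gfun_eq)
qed

lemma continuous_on_gfun: "continuous_on {0..} g"
proof -
  have "continuous_on {0..} (\<lambda>r. ratio_integral (min r R))"
    unfolding ratio_integral_def[abs_def]
    by (rule continuous_on_compose2[OF continuous_on_integral_atLeast[OF continuous_on_Psi_over_psi]])
      (use R_pos in \<open>auto intro!: continuous_intros\<close>)
  then show ?thesis
    unfolding gfun_eq[abs_def] using ratio_integral_R_pos by (intro continuous_intros) auto
qed

lemma gfun_has_derivative_inside:
  assumes "0 \<le> r" and "r \<le> R"
  shows "(g has_real_derivative - (\<Psi> r / \<psi> r) / (2 * ratio_integral R)) (at r within {0..R})"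
proof -
  have "((\<lambda>x. 1 - ratio_integral x / (2 * ratio_integral R)) has_real_derivative
      - (\<Psi> r / \<psi> r) / (2 * ratio_integral R)) (at r within {0..R})"
    using DERIV_subset[OF ratio_integral_has_derivative[OF assms(1)], of "{0..R}"]
      ratio_integral_R_pos
    by (auto intro!: derivative_eq_intros)
  then show ?thesis
    by (rule has_field_derivative_transform[rotated 2]) (use assms in \<open>auto simp: gfun_eq\<close>)
qed

definition ff' :: "real \<Rightarrow> real" where
  "ff' r = \<psi> r * g r"

text \<open>\<open>f'\<close> has a corner at \<open>R\<close>: \<open>ff'' R\<close> is its left derivative there.\<close>

definition ff'' :: "real \<Rightarrow> real" where
  "ff'' r = (if r \<le> R then - 2 * \<alpha> * r * \<psi> r * g r - \<Psi> r / (2 * ratio_integral R) else 0)"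

lemma continuous_on_ff': "continuous_on {0..} ff'"
  unfolding ff'_def[abs_def] by (intro continuous_intros continuous_on_psi continuous_on_gfun)

lemma ff_eq_integral: "f r = integral {0..r} ff'"
  by (simp add: ff_def ff'_def[abs_def])

lemma ff_has_derivative:
  assumes "0 \<le> r"
  shows "(f has_real_derivative ff' r) (at r within {0..})"
  unfolding ff_eq_integral[abs_def]
  by (rule integral_has_real_derivative_atLeast[OF continuous_on_ff' assms])

lemma ff'_has_derivative_inside:
  assumes "0 \<le> r" and "r \<le> R"
  shows "(ff' has_real_derivative ff'' r) (at r within {0..R})"
proof -
  have "((\<lambda>x. exp (- \<alpha> * x\<^sup>2)) has_real_derivative - 2 * \<alpha> * r * \<psi> r) (at r within {0..R})"
    using psi_inside[OF assms] by (auto intro!: derivative_eq_intros)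
  then have "(\<psi> has_real_derivative - 2 * \<alpha> * r * \<psi> r) (at r within {0..R})"
    by (rule has_field_derivative_transform[rotated 2]) (use assms psi_inside in auto)
  then have "(ff' has_real_derivative
      - 2 * \<alpha> * r * \<psi> r * g r + (- (\<Psi> r / \<psi> r) / (2 * ratio_integral R)) * \<psi> r)
      (at r within {0..R})"
    unfolding ff'_def[abs_def] using gfun_has_derivative_inside[OF assms]
    by (rule DERIV_mult)
  moreover have "- 2 * \<alpha> * r * \<psi> r * g r + (- (\<Psi> r / \<psi> r) / (2 * ratio_integral R)) * \<psi> r
      = ff'' r"
    using assms psi_pos[of \<alpha> R r] by (simp add: ff''_def)
  ultimately show ?thesis by simp
qed

lemma ff'_outside:
  assumes "R \<le> r"
  shows "ff' r = E / 2"
  using assms by (simp add: ff'_def psi_outside gfun_outside)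

lemma ff'_has_derivative_outside:
  assumes "R < r"
  shows "(ff' has_real_derivative ff'' r) (at r within {R..})"
proof -
  have "((\<lambda>_. E / 2) has_real_derivative ff'' r) (at r within {R..})"
    using assms by (simp add: ff''_def)
  then show ?thesis
    by (rule has_field_derivative_transform[rotated 2]) (use assms ff'_outside in auto)
qed

lemma ff'_0: "ff' 0 = 1"
  by (simp add: ff'_def gfun_0 psi_def)

lemma ff'_bounds:
  assumes "0 \<le> r"
  shows "\<psi> r / 2 \<le> ff' r \<and> ff' r \<le> \<psi> r"
  using gfun_bounds[OF assms] psi_pos[of \<alpha> R r] by (simp add: ff'_def mult_left_le)

lemma ff_bounds:
  assumes "0 \<le> r"
  shows "\<Psi> r / 2 \<le> f r \<and> f r \<le> \<Psi> r"
proof -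
  have "integral {0..r} (\<lambda>s. \<psi> s / 2) \<le> integral {0..r} ff'"
    "integral {0..r} ff' \<le> integral {0..r} \<psi>"
    by (rule integral_le;
        use ff'_bounds in \<open>auto intro!: integrable_continuous_interval continuous_intros
          continuous_on_psi continuous_on_subset[OF continuous_on_ff']\<close>)+
  then show ?thesis
    by (simp add: ff_eq_integral Psi_def)
qed

lemma ff''_nonpos:
  assumes "0 \<le> r"
  shows "ff'' r \<le> 0"
proof -
  have "0 \<le> \<alpha> * r * \<psi> r * g r"
    using alpha_nonneg assms psi_pos[of \<alpha> R r] gfun_bounds[OF assms] by simp
  moreover have "0 \<le> \<Psi> r / (2 * ratio_integral R)"
    using Psi_nonneg[OF assms] ratio_integral_R_pos by simp
  ultimately show ?thesis
    by (simp add: ff''_def)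
qed

lemma ff''_drift_bound:
  assumes "0 \<le> r" and "r \<le> R"
  shows "ff'' r + \<alpha> * r * ff' r \<le> - (E / R\<^sup>2) * f r"
proof -
  have "ff'' r + \<alpha> * r * ff' r = - (\<alpha> * r * \<psi> r * g r) - \<Psi> r / (2 * ratio_integral R)"
    using assms by (simp add: ff''_def ff'_def)
  also have "\<dots> \<le> - (\<Psi> r / (2 * ratio_integral R))"
    using alpha_nonneg assms psi_pos[of \<alpha> R r] gfun_bounds[OF assms(1)] by simp
  also have "\<dots> \<le> - (E / R\<^sup>2) * \<Psi> r"
  proof -
    have "2 * ratio_integral R \<le> R\<^sup>2 / E"
      using ratio_integral_R_le by (simp add: field_simps)
    then have "E / R\<^sup>2 \<le> 1 / (2 * ratio_integral R)"
      using ratio_integral_R_pos R_pos by (simp add: field_simps)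
    then show ?thesis
      using Psi_nonneg[OF assms(1)] mult_right_mono by fastforce
  qed
  also have "\<dots> \<le> - (E / R\<^sup>2) * f r"
  proof -
    have "E / R\<^sup>2 * f r \<le> E / R\<^sup>2 * \<Psi> r"
      using ff_bounds[OF assms(1)] by (intro mult_left_mono) auto
    then show ?thesis by simp
  qed
  finally show ?thesis .
qed

lemma ff_linear_gain:
  assumes "0 \<le> r" and "r \<le> t"
  shows "f r + (t - r) * E / 2 \<le> f t"
proof -
  have "f t = f r + integral {r..t} ff'"
  proof -
    have "ff' integrable_on {0..t}"
      by (intro integrable_continuous_interval continuous_on_subset[OF continuous_on_ff']) auto
    then show ?thesis
      unfolding ff_eq_integral
      using Henstock_Kurzweil_Integration.integral_combine[of 0 r t ff'] assms by simp
  qed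
  moreover have "integral {r..t} (\<lambda>_. E / 2) \<le> integral {r..t} ff'"
  proof (rule integral_le)
    show "ff' integrable_on {r..t}"
      using assms
      by (intro integrable_continuous_interval continuous_on_subset[OF continuous_on_ff']) auto
    show "E / 2 \<le> ff' x" if "x \<in> {r..t}" for x
      using ff'_bounds[of x] exp_le_psi[of x] that assms by auto
  qed (rule integrable_const_ivl)
  ultimately show ?thesis
    using assms by (simp add: mult.commute)
qed

lemma ff_dilation_bound:
  assumes "0 \<le> c" and "c \<le> 2" and "0 \<le> r"
  shows "f r \<le> exp (- (c * E) / 4) * f ((1 + c) * r)"
proof (rule le_exp_mult_of_linear_gain)
  show "0 \<le> f r" "f r \<le> r"
    using ff_bounds[OF assms(3)] Psi_nonneg[OF assms(3)] Psi_upper[OF assms(3)] by auto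
  show "f r + c * E * r / 2 \<le> f ((1 + c) * r)"
    using ff_linear_gain[of r "(1 + c) * r"] assms by (simp add: algebra_simps)
  show "0 \<le> c * E" "c * E \<le> 2"
    using assms mult_left_le[OF E_le_one assms(1)] by auto
qed

end

theorem lemma2:
  fixes \<alpha> R :: real
  assumes "\<alpha> > 0" and "R > 0"
  shows "\<exists>f' f''.
    (\<forall>r\<ge>0. (ff \<alpha> R has_real_derivative f' r) (at r within {0..})) \<and>
    (\<forall>r\<ge>0. (f' has_real_derivative f'' r) (at r within (if r \<le> R then {0..R} else {R..}))) \<and>
    \<comment> \<open>F1\<close>
    ff \<alpha> R 0 = 0 \<and> f' 0 = 1 \<and>
    \<comment> \<open>F2\<close>
    (\<forall>r\<ge>0. (1/2) * exp (- \<alpha> * R\<^sup>2) \<le> (1/2) * psi \<alpha> R r \<and>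
             (1/2) * psi \<alpha> R r \<le> f' r \<and> f' r \<le> 1) \<and>
    \<comment> \<open>F3\<close>
    (\<forall>r\<ge>0. (1/2) * exp (- \<alpha> * R\<^sup>2) * r \<le> (1/2) * Psi \<alpha> R r \<and>
             (1/2) * Psi \<alpha> R r \<le> ff \<alpha> R r \<and> ff \<alpha> R r \<le> Psi \<alpha> R r \<and> Psi \<alpha> R r \<le> r) \<and>
    \<comment> \<open>F4\<close>
    (\<forall>r. 0 \<le> r \<and> r \<le> R \<longrightarrow>
        f'' r + \<alpha> * r * f' r \<le> - (exp (- \<alpha> * R\<^sup>2) / R\<^sup>2) * ff \<alpha> R r) \<and>
    \<comment> \<open>F5\<close>
    (\<forall>r\<ge>0. f'' r \<le> 0) \<and> (\<forall>r>R. f'' r = 0) \<and>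
    \<comment> \<open>F6\<close>
    (\<alpha> * R\<^sup>2 \<ge> ln 2 \<longrightarrow>
       (\<forall>c r. 0 < c \<and> c < 1 \<and> 0 \<le> r \<longrightarrow>
          ff \<alpha> R r \<le> exp (- (c * exp (- \<alpha> * R\<^sup>2)) / 4) * ff \<alpha> R ((1 + c) * r)))"
proof -
  interpret cutoff_profile \<alpha> R
    using assms by unfold_locales auto
  have D1: "\<forall>r\<ge>0. (f has_real_derivative ff' r) (at r within {0..})"
    using ff_has_derivative by blast
  have D2: "\<forall>r\<ge>0. (ff' has_real_derivative ff'' r) (at r within (if r \<le> R then {0..R} else {R..}))"
    using ff'_has_derivative_inside ff'_has_derivative_outside by auto
  have F1: "f 0 = 0"
    by (simp add: ff_def)
  have F2: "\<forall>r\<ge>0. (1/2) * E \<le> (1/2) * \<psi> r \<and> (1/2) * \<psi> r \<le> ff' r \<and> ff' r \<le> 1"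
    using exp_le_psi ff'_bounds psi_le_one by (auto intro: order_trans)
  have F3: "\<forall>r\<ge>0. (1/2) * E * r \<le> (1/2) * \<Psi> r \<and> (1/2) * \<Psi> r \<le> f r \<and> f r \<le> \<Psi> r \<and> \<Psi> r \<le> r"
    using Psi_lower ff_bounds Psi_upper by auto
  have F4: "\<forall>r. 0 \<le> r \<and> r \<le> R \<longrightarrow> ff'' r + \<alpha> * r * ff' r \<le> - (E / R\<^sup>2) * f r"
    using ff''_drift_bound by blast
  have F5: "(\<forall>r\<ge>0. ff'' r \<le> 0) \<and> (\<forall>r>R. ff'' r = 0)"
    using ff''_nonpos by (simp add: ff''_def)
  have F6: "\<forall>c r. 0 < c \<and> c < 1 \<and> 0 \<le> r \<longrightarrow> f r \<le> exp (- (c * E) / 4) * f ((1 + c) * r)"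
    using ff_dilation_bound by simp
  show ?thesis
    using D1 D2 F1 ff'_0 F2 F3 F4 F5 F6 by blast
qed

end
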